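(* Let $k\ge2$ be a constant integer, let $f(n)=o(\log\log n)$ with $f(n)\to\infty$, and let $m=\left\lceil f(n)\,n^{1-k/(k^2+k-1)}\right\rceil$. Consider the random $k$-tree process, enumerate the $k$-cliques of $G(m)$ as $C_1,\dots,C_{mk+1}$, and for each $j$ let the piece $H_j$ be the induced subgraph of $G(n)$ on the set of vertices $v$ such that every path in $G(n)$ from $v$ to a vertex of $G(m)$ intersects $V(C_j)$. Call a piece moderate if its number of vertices lies between $n/(mf(n))$ and $nf(n)/m$. Then with probability $1-o(1)$ the number of non-moderate pieces is $o(m)$.
   Context: Random $k$-tree process: $G(0)$ is a clique on $k$ vertices; for $t\ge1$, $G(t)$ is obtained from $G(t-1)$ by choosing a $k$-clique of $G(t-1)$ uniformly at random, creating a new vertex, and joining it to all vertices of the chosen clique; $G(m)$ is a subgraph of $G(n)$ and has $mk+1$ many $k$-cliques. *)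

theory Defs
  imports "HOL-Probability.Probability" "HOL-Library.Landau_Symbols"
begin

text \<open>A finite simple graph with natural-number vertices: vertex set and edge set,
  edges being two-element sets.\<close>
type_synonym graph = "nat set \<times> nat set set"

definition verts :: "graph \<Rightarrow> nat set" where "verts G = fst G"
definition edges :: "graph \<Rightarrow> nat set set" where "edges G = snd G"

definition kcliques :: "nat \<Rightarrow> graph \<Rightarrow> nat set set" where
  "kcliques k G = {C. C \<subseteq> verts G \<and> card C = k \<and>
     (\<forall>u\<in>C. \<forall>v\<in>C. u \<noteq> v \<longrightarrow> {u, v} \<in> edges G)}"

definition kclique0 :: "nat \<Rightarrow> graph" where
  "kclique0 k = ({0..<k}, {{u, v} | u v. u < k \<and> v < k \<and> u \<noteq> v})"

text \<open>Add a new vertex (labelled by the current number of vertices, i.e. its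
  arrival time plus k-1) joined to all vertices of the clique C.\<close>
definition add_vertex :: "graph \<Rightarrow> nat set \<Rightarrow> graph" where
  "add_vertex G C = (let x = card (verts G) in
     (insert x (verts G), edges G \<union> {{x, u} | u. u \<in> C}))"

fun ktree_process :: "nat \<Rightarrow> nat \<Rightarrow> graph pmf" where
  "ktree_process k 0 = return_pmf (kclique0 k)"
| "ktree_process k (Suc t) =
     bind_pmf (ktree_process k t) (\<lambda>G. map_pmf (add_vertex G) (pmf_of_set (kcliques k G)))"

text \<open>Since vertices are labelled by arrival time, G(m) is the subgraph of G(n)
  induced on the vertices 0,...,k+m-1 (later vertices only add edges incident to
  themselves).\<close>
definition initial_graph :: "nat \<Rightarrow> nat \<Rightarrow> graph \<Rightarrow> graph" where
  "initial_graph k m G = ({v \<in> verts G. v < k + m},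
                          {e \<in> edges G. \<forall>v\<in>e. v < k + m})"

definition is_path :: "graph \<Rightarrow> nat list \<Rightarrow> bool" where
  "is_path G ps \<longleftrightarrow> ps \<noteq> [] \<and> distinct ps \<and> set ps \<subseteq> verts G \<and>
     (\<forall>i. Suc i < length ps \<longrightarrow> {ps ! i, ps ! Suc i} \<in> edges G)"

definition piece :: "graph \<Rightarrow> nat set \<Rightarrow> nat set \<Rightarrow> nat set" where
  "piece G W C = {v \<in> verts G. \<forall>ps. is_path G ps \<and> hd ps = v \<and> last ps \<in> W
                                    \<longrightarrow> set ps \<inter> C \<noteq> {}}"

definition non_moderate_count ::
  "nat \<Rightarrow> (nat \<Rightarrow> real) \<Rightarrow> nat \<Rightarrow> nat \<Rightarrow> graph \<Rightarrow> nat" where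
  "non_moderate_count k f n m G =
     card {C \<in> kcliques k (initial_graph k m G).
        \<not> (real n / (real m * f n) \<le> real (card (piece G (verts (initial_graph k m G)) C))
           \<and> real (card (piece G (verts (initial_graph k m G)) C)) \<le> real n * f n / real m)}"

end

theory Submission
  imports Defs "HOL-Analysis.Gamma_Function" "HOL-Real_Asymp.Real_Asymp"
begin

(* Let u_C be 1/k times the number of k-cliques inside the piece of a clique C of G(m);
   a piece with P vertices contains 1 + k (P - k) of them.  A new vertex attached to a
   clique inside the piece joins the piece and adds k cliques to it.  This happens with
   probability k u_C / (1 + k t), and then u_C grows by one, so the u_C evolve like the
   colours of a Polya urn: for every psi with u psi(u + 1) = (u + a) psi(u), the expectation
   of the sum of the psi(u_C) is multiplied by 1 + k a / (1 + k t) in each step.  For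
   psi(u) = u this gives expectation about n, and for psi(u) = Gamma(u - s) / Gamma(u),
   which dominates u powr -s (a = -s), it gives at most about m (m/n) powr s.  By Markov's
   inequality, the expected numbers of pieces with more than n f(n)/m and with fewer than
   n / (m f(n)) vertices are O(m / f(n)) and O(m f(n) powr -s), both o(m); a second
   application of Markov's inequality turns this into the statement. *)

lemma is_path_iff_successively:
  "is_path G ps \<longleftrightarrow> ps \<noteq> [] \<and> distinct ps \<and> set ps \<subseteq> verts G \<and>
     successively (\<lambda>u v. {u, v} \<in> edges G) ps"
  unfolding is_path_def successively_conv_nth by blast

lemma verts_add_vertex: "verts (add_vertex G C) = insert (card (verts G)) (verts G)"
  by (simp add: add_vertex_def verts_def Let_def)

lemma edges_add_vertex: "edges (add_vertex G C) = edges G \<union> {{card (verts G), u} | u. u \<in> C}"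
  by (simp add: add_vertex_def verts_def edges_def Let_def)

definition is_clique :: "graph \<Rightarrow> nat set \<Rightarrow> bool" where
  "is_clique G D \<longleftrightarrow> (\<forall>u\<in>D. \<forall>v\<in>D. u \<noteq> v \<longrightarrow> {u, v} \<in> edges G)"

lemma kcliques_iff: "D \<in> kcliques k G \<longleftrightarrow> D \<subseteq> verts G \<and> card D = k \<and> is_clique G D"
  unfolding kcliques_def is_clique_def by auto

lemma finite_kcliques: "finite (verts G) \<Longrightarrow> finite (kcliques k G)"
  unfolding kcliques_def by (rule finite_subset[of _ "Pow (verts G)"]) auto

lemma pieceI:
  "v \<in> verts G \<Longrightarrow>
   (\<And>ps. is_path G ps \<Longrightarrow> hd ps = v \<Longrightarrow> last ps \<in> W \<Longrightarrow> set ps \<inter> C = {} \<Longrightarrow> False) \<Longrightarrow>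
   v \<in> piece G W C"
  unfolding piece_def by blast

lemma pieceD:
  "v \<in> piece G W C \<Longrightarrow> is_path G ps \<Longrightarrow> hd ps = v \<Longrightarrow> last ps \<in> W \<Longrightarrow> set ps \<inter> C \<noteq> {}"
  unfolding piece_def by blast

lemma piece_subset_verts: "piece G W C \<subseteq> verts G"
  unfolding piece_def by blast

locale vertex_addition =
  fixes G :: graph and D :: "nat set" and N :: nat
  assumes verts_G: "verts G = {0..<N}"
    and edges_G: "\<And>e. e \<in> edges G \<Longrightarrow> e \<subseteq> verts G"
    and D_verts: "D \<subseteq> verts G" and D_clique: "is_clique G D"
begin

abbreviation "G' \<equiv> add_vertex G D"

lemma verts_G': "verts G' = insert N (verts G)"
  by (simp add: verts_add_vertex verts_G)

lemma edges_G': "edges G' = edges G \<union> {{N, u} | u. u \<in> D}"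
  by (simp add: edges_add_vertex verts_G)

lemma new_vertex_notin: "N \<notin> verts G"
  by (simp add: verts_G)

lemma finite_D: "finite D"
  using D_verts verts_G finite_subset by auto

lemma neighbour_new_vertex: "{N, v} \<in> edges G' \<Longrightarrow> v \<noteq> N \<Longrightarrow> v \<in> D"
  using edges_G new_vertex_notin unfolding edges_G' by (auto simp: doubleton_eq_iff)

lemma is_path_G': "is_path G ps \<Longrightarrow> is_path G' ps"
  unfolding is_path_iff_successively using verts_G' edges_G'
  by (auto elim: successively_mono)

lemma is_path_G_if_avoids: "is_path G' ps \<Longrightarrow> N \<notin> set ps \<Longrightarrow> is_path G ps"
  unfolding is_path_iff_successively
proof (elim conjE, intro conjI)
  assume a: "successively (\<lambda>u v. {u, v} \<in> edges G') ps" "N \<notin> set ps" "set ps \<subseteq> verts G'"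
  show "set ps \<subseteq> verts G" using a verts_G' by auto
  have "successively (\<lambda>u v. {u, v} \<in> edges G) ps \<longleftrightarrow> successively (\<lambda>u v. {u, v} \<in> edges G') ps"
    by (rule successively_cong) (use a(2) in \<open>auto simp: edges_G' doubleton_eq_iff\<close>)
  then show "successively (\<lambda>u v. {u, v} \<in> edges G) ps" using a by simp
qed auto

text \<open>The neighbours of the new vertex form a clique, so a path through it can skip it.\<close>

lemma is_path_bypass:
  assumes p: "is_path G' ps" and hd_ps: "hd ps \<noteq> N" and last_ps: "last ps \<noteq> N"
  obtains qs where "is_path G qs" "hd qs = hd ps" "last qs = last ps" "set qs \<subseteq> set ps"
proof (cases "N \<in> set ps")
  case False
  then show ?thesis using is_path_G_if_avoids p that by blast
next
  case True
  then obtain as bs where ps: "ps = as @ N # bs" by (meson split_list)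
  have "as \<noteq> []" using hd_ps ps by auto
  then obtain as' a where as: "as = as' @ [a]" by (metis append_butlast_last_id)
  obtain b bs' where bs: "bs = b # bs'"
    using last_ps ps by (cases bs) auto
  have ps': "ps = as' @ [a, N, b] @ bs'" using ps as bs by simp
  from p have d: "distinct ps" and sp: "successively (\<lambda>u v. {u, v} \<in> edges G') ps"
    and sv: "set ps \<subseteq> verts G'"
    unfolding is_path_iff_successively by auto
  have "{a, N} \<in> edges G'" and "{N, b} \<in> edges G'"
    using sp unfolding ps' by (simp_all add: successively_append_iff)
  moreover have "a \<noteq> N" "b \<noteq> N" "a \<noteq> b" using d unfolding ps' by auto
  ultimately have "a \<in> D" "b \<in> D"
    using neighbour_new_vertex by (auto simp: insert_commute)
  then have ab: "{a, b} \<in> edges G" using D_clique \<open>a \<noteq> b\<close> unfolding is_clique_def by auto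
  define qs where "qs = as' @ [a, b] @ bs'"
  have "is_path G' qs"
    unfolding is_path_iff_successively
  proof (intro conjI)
    show "qs \<noteq> []" "distinct qs" "set qs \<subseteq> verts G'"
      using d sv unfolding ps' qs_def by auto
    show "successively (\<lambda>u v. {u, v} \<in> edges G') qs"
      using sp ab unfolding ps' qs_def edges_G' by (auto simp: successively_append_iff)
  qed
  moreover have "N \<notin> set qs" using d unfolding ps' qs_def by auto
  ultimately have "is_path G qs" using is_path_G_if_avoids by blast
  moreover have "hd qs = hd ps" "last qs = last ps" "set qs \<subseteq> set ps"
    unfolding qs_def ps' by (auto simp: hd_append last_append)
  ultimately show ?thesis using that by blast
qed

lemma piece_add_vertex_old:
  assumes W: "W \<subseteq> verts G" and v: "v \<in> verts G"
  shows "v \<in> piece G' W C \<longleftrightarrow> v \<in> piece G W C"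
proof
  assume v': "v \<in> piece G' W C"
  show "v \<in> piece G W C"
    using v pieceD[OF v' is_path_G'] by (auto intro: pieceI)
next
  assume v': "v \<in> piece G W C"
  show "v \<in> piece G' W C"
  proof (rule pieceI)
    show "v \<in> verts G'" using v verts_G' by auto
    fix ps assume p: "is_path G' ps" "hd ps = v" "last ps \<in> W" "set ps \<inter> C = {}"
    have "hd ps \<noteq> N" "last ps \<noteq> N" using p v W new_vertex_notin by auto
    then obtain qs where qs: "is_path G qs" "hd qs = hd ps" "last qs = last ps" "set qs \<subseteq> set ps"
      by (rule is_path_bypass[OF p(1)])
    have "set qs \<inter> C \<noteq> {}" using pieceD[OF v' qs(1)] qs(2,3) p(2,3) by simp
    then show False using qs(4) p(4) by blast
  qed
qed

lemma new_vertex_in_piece_iff: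
  assumes W: "W \<subseteq> verts G" and C: "C \<subseteq> verts G"
  shows "N \<in> piece G' W C \<longleftrightarrow> D \<subseteq> piece G W C"
proof
  assume N: "N \<in> piece G' W C"
  show "D \<subseteq> piece G W C"
  proof
    fix d assume d: "d \<in> D"
    show "d \<in> piece G W C"
    proof (rule pieceI)
      show "d \<in> verts G" using d D_verts by auto
      fix ps assume p: "is_path G ps" "hd ps = d" "last ps \<in> W" "set ps \<inter> C = {}"
      obtain ys where ps: "ps = d # ys" using p(1,2) unfolding is_path_def by (cases ps) auto
      have "N \<notin> set ps" using p(1) new_vertex_notin unfolding is_path_def by auto
      moreover have "{N, d} \<in> edges G'" using d unfolding edges_G' by auto
      ultimately have "is_path G' (N # ps)"
        using is_path_G'[OF p(1)] verts_G' unfolding ps is_path_iff_successively by auto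
      moreover have "last (N # ps) \<in> W" "set (N # ps) \<inter> C = {}"
        using p(3,4) C new_vertex_notin unfolding ps by auto
      ultimately show False using pieceD[OF N, of "N # ps"] by simp
    qed
  qed
next
  assume D_piece: "D \<subseteq> piece G W C"
  show "N \<in> piece G' W C"
  proof (rule pieceI)
    show "N \<in> verts G'" using verts_G' by auto
    fix ps assume p: "is_path G' ps" "hd ps = N" "last ps \<in> W" "set ps \<inter> C = {}"
    obtain rs where ps: "ps = N # rs" using p(1,2) unfolding is_path_def by (cases ps) auto
    obtain d rs' where rs: "rs = d # rs'" using ps p(3) W new_vertex_notin by (cases rs) auto
    have "is_path G' rs" "{N, d} \<in> edges G'" "d \<noteq> N" "N \<notin> set rs"
      using p(1) unfolding ps rs is_path_iff_successively by auto
    then have "is_path G rs" "d \<in> D" using is_path_G_if_avoids neighbour_new_vertex by auto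
    moreover have "last rs \<in> W" "set rs \<inter> C = {}" using p(3,4) unfolding ps rs by auto
    ultimately show False using D_piece pieceD[of d G W C rs] unfolding rs by auto
  qed
qed

lemma piece_add_vertex:
  assumes W: "W \<subseteq> verts G" and C: "C \<subseteq> verts G"
  shows "piece G' W C = piece G W C \<union> (if D \<subseteq> piece G W C then {N} else {})"
proof (rule set_eqI)
  fix v
  consider "v = N" | "v \<in> verts G" | "v \<notin> verts G'"
    using verts_G' by blast
  then show "v \<in> piece G' W C \<longleftrightarrow> v \<in> piece G W C \<union> (if D \<subseteq> piece G W C then {N} else {})"
  proof cases
    case 1
    then show ?thesis
      using new_vertex_in_piece_iff[OF W C] piece_subset_verts[of G W C] new_vertex_notin by auto
  next
    case 2
    then show ?thesis using piece_add_vertex_old[OF W] new_vertex_notin by auto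
  next
    case 3
    then show ?thesis using piece_subset_verts[of G' W C] piece_subset_verts[of G W C] verts_G' by auto
  qed
qed

definition new_cliques :: "nat set set" where
  "new_cliques = (\<lambda>u. insert N (D - {u})) ` D"

lemma card_new_cliques: "card new_cliques = card D"
proof -
  have "inj_on (\<lambda>u. insert N (D - {u})) D"
  proof (rule inj_onI)
    fix x y assume x: "x \<in> D" and eq: "insert N (D - {x}) = insert N (D - {y})"
    have "x \<noteq> N" using x D_verts new_vertex_notin by auto
    then show "x = y" using eq x by blast
  qed
  then show ?thesis unfolding new_cliques_def by (rule card_image)
qed

lemma kcliques_add_vertex:
  assumes cD: "card D = k"
  shows "kcliques k G' = kcliques k G \<union> new_cliques"
proof (rule set_eqI, rule iffI)
  fix Q assume Q: "Q \<in> kcliques k G'"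
  have Qv: "Q \<subseteq> insert N (verts G)" and cQ: "card Q = k"
    and Qe: "\<And>u v. u \<in> Q \<Longrightarrow> v \<in> Q \<Longrightarrow> u \<noteq> v \<Longrightarrow> {u, v} \<in> edges G'"
    using Q unfolding kcliques_def verts_G' by auto
  show "Q \<in> kcliques k G \<union> new_cliques"
  proof (cases "N \<in> Q")
    case False
    have "{u, v} \<in> edges G" if "u \<in> Q" "v \<in> Q" "u \<noteq> v" for u v
      using Qe[OF that] False that unfolding edges_G' by (auto simp: doubleton_eq_iff)
    moreover have "Q \<subseteq> verts G" using Qv False by auto
    ultimately show ?thesis using cQ unfolding kcliques_def by auto
  next
    case True
    have sub: "Q - {N} \<subseteq> D" using Qe True neighbour_new_vertex by blast
    have "finite Q" using Qv verts_G finite_subset by auto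
    then have "card (Q - {N}) = k - 1" "k \<ge> 1"
      using cQ True by (auto simp: card_gt_0_iff Suc_le_eq)
    then have "card (D - (Q - {N})) = 1"
      using card_Diff_subset[OF finite_subset[OF sub finite_D] sub] cD by simp
    then obtain u where u: "D - (Q - {N}) = {u}" by (meson card_1_singletonE)
    then have "Q = insert N (D - {u})" "u \<in> D" using sub True by blast+
    then show ?thesis unfolding new_cliques_def by blast
  qed
next
  fix Q assume "Q \<in> kcliques k G \<union> new_cliques"
  then show "Q \<in> kcliques k G'"
  proof
    assume "Q \<in> kcliques k G"
    then show ?thesis unfolding kcliques_def verts_G' edges_G' by auto
  next
    assume "Q \<in> new_cliques"
    then obtain u where u: "u \<in> D" and Q: "Q = insert N (D - {u})"
      unfolding new_cliques_def by blast
    have "N \<notin> D" using D_verts new_vertex_notin by auto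
    moreover have "k \<ge> 1" using cD u finite_D by (auto simp: Suc_le_eq card_gt_0_iff)
    ultimately have "card Q = k" using Q cD u finite_D by (simp add: card_insert_if)
    moreover have "Q \<subseteq> verts G'" using Q D_verts verts_G' by auto
    moreover have "{a, b} \<in> edges G'" if "a \<in> Q" "b \<in> Q" "a \<noteq> b" for a b
      using that D_clique unfolding Q edges_G' is_clique_def by (auto simp: insert_commute)
    ultimately show ?thesis unfolding kcliques_def by auto
  qed
qed

lemma card_kcliques_within_add_vertex:
  assumes cD: "card D = k" and P: "P \<subseteq> verts G"
  shows "card {Q \<in> kcliques k G'. Q \<subseteq> P \<union> (if D \<subseteq> P then {N} else {})} =
         card {Q \<in> kcliques k G. Q \<subseteq> P} + (if D \<subseteq> P then k else 0)"
proof -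
  define P' where "P' = P \<union> (if D \<subseteq> P then {N} else {})"
  have old: "Q \<subseteq> P' \<longleftrightarrow> Q \<subseteq> P" if "Q \<in> kcliques k G" for Q
    using that new_vertex_notin unfolding kcliques_def P'_def by auto
  have new: "Q \<subseteq> P' \<longleftrightarrow> D \<subseteq> P" if "Q \<in> new_cliques" for Q
    using that P new_vertex_notin unfolding new_cliques_def P'_def by auto
  have eq: "{Q \<in> kcliques k G'. Q \<subseteq> P'} =
            {Q \<in> kcliques k G. Q \<subseteq> P} \<union> (if D \<subseteq> P then new_cliques else {})"
    unfolding kcliques_add_vertex[OF cD] using old new by auto
  have "finite {Q \<in> kcliques k G. Q \<subseteq> P}" using verts_G finite_kcliques by simp
  moreover have "finite new_cliques" unfolding new_cliques_def using finite_D by simp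
  moreover have "{Q \<in> kcliques k G. Q \<subseteq> P} \<inter> new_cliques = {}"
    using new_vertex_notin unfolding kcliques_def new_cliques_def by auto
  ultimately show ?thesis
    unfolding P'_def[symmetric] eq using card_new_cliques cD by (simp add: card_Un_disjoint)
qed

lemma card_kcliques_add_vertex:
  assumes "card D = k"
  shows "card (kcliques k G') = card (kcliques k G) + k"
proof -
  have "{Q \<in> kcliques k G'. Q \<subseteq> verts G'} = kcliques k G'"
       "{Q \<in> kcliques k G. Q \<subseteq> verts G} = kcliques k G"
    unfolding kcliques_def by auto
  then show ?thesis
    using card_kcliques_within_add_vertex[OF assms order_refl] D_verts verts_G' by simp
qed

end

definition ktree_state :: "nat \<Rightarrow> nat \<Rightarrow> graph \<Rightarrow> bool" where
  "ktree_state k t G \<longleftrightarrow> verts G = {0..<k + t} \<and> (\<forall>e\<in>edges G. e \<subseteq> verts G) \<and>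
      card (kcliques k G) = 1 + k * t"

lemma ktree_state_kcliques:
  assumes "ktree_state k t G"
  shows "finite (kcliques k G)" "kcliques k G \<noteq> {}"
  using assms finite_kcliques unfolding ktree_state_def by auto

lemma ktree_state_vertex_addition:
  assumes "ktree_state k t G" "D \<in> kcliques k G"
  shows "vertex_addition G D (k + t)"
  using assms unfolding ktree_state_def kcliques_iff by unfold_locales auto

lemma kcliques_kclique0: "kcliques k (kclique0 k) = {{0..<k}}"
proof (rule set_eqI, rule iffI)
  fix Q assume "Q \<in> kcliques k (kclique0 k)"
  then have "Q \<subseteq> {0..<k}" "card Q = k" unfolding kcliques_def kclique0_def verts_def by auto
  then show "Q \<in> {{0..<k}}" using card_subset_eq[of "{0..<k}" Q] by auto
next
  fix Q assume "Q \<in> {{0..<k::nat}}"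
  then show "Q \<in> kcliques k (kclique0 k)"
    unfolding kcliques_def kclique0_def verts_def edges_def by (auto; blast)
qed

lemma ktree_state_kclique0: "ktree_state k 0 (kclique0 k)"
  unfolding ktree_state_def kcliques_kclique0
  by (auto simp: kclique0_def verts_def edges_def)

lemma ktree_state_add_vertex:
  assumes G: "ktree_state k t G" and D: "D \<in> kcliques k G"
  shows "ktree_state k (Suc t) (add_vertex G D)"
proof -
  interpret vertex_addition G D "k + t" using ktree_state_vertex_addition[OF G D] .
  show ?thesis
    using G D_verts card_kcliques_add_vertex D unfolding ktree_state_def kcliques_iff verts_G' edges_G'
    by auto
qed

lemma ktree_state_process: "G \<in> set_pmf (ktree_process k t) \<Longrightarrow> ktree_state k t G"
proof (induction t arbitrary: G)
  case 0
  then show ?case using ktree_state_kclique0 by simp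
next
  case (Suc t)
  then obtain G0 D where G0: "G0 \<in> set_pmf (ktree_process k t)"
    and D: "D \<in> set_pmf (pmf_of_set (kcliques k G0))" and G: "G = add_vertex G0 D" by auto
  have "ktree_state k t G0" using Suc.IH G0 .
  moreover have "D \<in> kcliques k G0" using D ktree_state_kcliques[OF calculation] by simp
  ultimately show ?case using ktree_state_add_vertex G by blast
qed

lemma finite_set_pmf_ktree_process: "finite (set_pmf (ktree_process k t))"
proof (induction t)
  case (Suc t)
  have "finite (set_pmf (pmf_of_set (kcliques k G)))" if "G \<in> set_pmf (ktree_process k t)" for G
    using ktree_state_kcliques[OF ktree_state_process[OF that]] by simp
  then show ?case using Suc by auto
qed simp

lemma expectation_bind_pmf_finite:
  fixes h :: "'b \<Rightarrow> 'c::{banach, second_countable_topology}"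
  assumes "finite (set_pmf p)" and "\<And>x. x \<in> set_pmf p \<Longrightarrow> finite (set_pmf (q x))"
  shows "measure_pmf.expectation (bind_pmf p q) h =
         measure_pmf.expectation p (\<lambda>x. measure_pmf.expectation (q x) h)"
  using assms by (simp add: pmf_expectation_bind[of "set_pmf p"] integral_measure_pmf[of "set_pmf p"])

lemma expectation_ktree_process_Suc:
  fixes F :: "graph \<Rightarrow> real"
  shows "measure_pmf.expectation (ktree_process k (Suc t)) F =
         measure_pmf.expectation (ktree_process k t)
           (\<lambda>G. (\<Sum>D\<in>kcliques k G. F (add_vertex G D)) / real (card (kcliques k G)))"
proof -
  have S: "finite (kcliques k G)" "kcliques k G \<noteq> {}" if "G \<in> set_pmf (ktree_process k t)" for G
    using ktree_state_kcliques[OF ktree_state_process[OF that]] by auto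
  show ?thesis
    unfolding ktree_process.simps
    by (subst expectation_bind_pmf_finite)
       (auto simp: finite_set_pmf_ktree_process S integral_pmf_of_set AE_measure_pmf_iff
             intro!: integral_cong_AE)
qed

definition root_cliques :: "nat \<Rightarrow> nat \<Rightarrow> graph \<Rightarrow> nat set set" where
  "root_cliques k m G = kcliques k (initial_graph k m G)"

definition root_piece :: "nat \<Rightarrow> nat \<Rightarrow> nat set \<Rightarrow> graph \<Rightarrow> nat set" where
  "root_piece k m C G = piece G {0..<k + m} C"

definition piece_cliques :: "nat \<Rightarrow> nat \<Rightarrow> nat set \<Rightarrow> graph \<Rightarrow> nat" where
  "piece_cliques k m C G = card {Q \<in> kcliques k G. Q \<subseteq> root_piece k m C G}"

lemma initial_graph_self: "ktree_state k m G \<Longrightarrow> initial_graph k m G = G"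
  unfolding ktree_state_def initial_graph_def verts_def edges_def
  by (cases G) fastforce

lemma initial_graph_add_vertex:
  assumes "ktree_state k t G" "m \<le> t"
  shows "initial_graph k m (add_vertex G D) = initial_graph k m G"
  using assms unfolding ktree_state_def initial_graph_def verts_add_vertex edges_add_vertex by auto

lemma verts_initial_graph: "ktree_state k t G \<Longrightarrow> m \<le> t \<Longrightarrow> verts (initial_graph k m G) = {0..<k + m}"
  unfolding ktree_state_def initial_graph_def verts_def by auto

lemma root_cliques_subset: "ktree_state k t G \<Longrightarrow> m \<le> t \<Longrightarrow> C \<in> root_cliques k m G \<Longrightarrow> C \<subseteq> {0..<k + m}"
  unfolding root_cliques_def kcliques_def using verts_initial_graph by blast

lemma root_cliques_add_vertex:
  "ktree_state k t G \<Longrightarrow> m \<le> t \<Longrightarrow> root_cliques k m (add_vertex G D) = root_cliques k m G"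
  unfolding root_cliques_def using initial_graph_add_vertex by metis

lemma finite_root_cliques: "ktree_state k t G \<Longrightarrow> m \<le> t \<Longrightarrow> finite (root_cliques k m G)"
  unfolding root_cliques_def using verts_initial_graph finite_kcliques by (metis finite_atLeastLessThan)

lemma root_piece_initial:
  assumes G: "ktree_state k m G" and C: "C \<in> kcliques k G"
  shows "root_piece k m C G = C"
proof -
  have vG: "verts G = {0..<k + m}" using G unfolding ktree_state_def by simp
  have Cv: "C \<subseteq> verts G" using C unfolding kcliques_def by auto
  show ?thesis unfolding root_piece_def
  proof (rule set_eqI, rule iffI)
    fix v assume v: "v \<in> piece G {0..<k + m} C"
    then have "v \<in> verts G" using piece_subset_verts by blast
    then have "is_path G [v]" unfolding is_path_def by simp
    then have "set [v] \<inter> C \<noteq> {}" using pieceD[OF v \<open>is_path G [v]\<close>] \<open>v \<in> verts G\<close> vG by simp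
    then show "v \<in> C" by simp
  next
    fix v assume v: "v \<in> C"
    show "v \<in> piece G {0..<k + m} C"
    proof (rule pieceI)
      show "v \<in> verts G" using v Cv by auto
      fix ps assume "is_path G ps" "hd ps = v" "last ps \<in> {0..<k + m}" "set ps \<inter> C = {}"
      then show False using v hd_in_set unfolding is_path_def by blast
    qed
  qed
qed

lemma root_piece_add_vertex:
  assumes G: "ktree_state k t G" and m: "m \<le> t" and D: "D \<in> kcliques k G"
    and C: "C \<in> root_cliques k m G"
  shows "root_piece k m C (add_vertex G D) =
           root_piece k m C G \<union> (if D \<subseteq> root_piece k m C G then {k + t} else {})"
proof -
  interpret vertex_addition G D "k + t" using ktree_state_vertex_addition[OF G D] .
  show ?thesis
    unfolding root_piece_def
    by (rule piece_add_vertex) (use root_cliques_subset[OF G m C] m verts_G in auto)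
qed

lemma piece_cliques_add_vertex:
  assumes G: "ktree_state k t G" and m: "m \<le> t" and D: "D \<in> kcliques k G"
    and C: "C \<in> root_cliques k m G"
  shows "piece_cliques k m C (add_vertex G D) =
           piece_cliques k m C G + (if D \<subseteq> root_piece k m C G then k else 0)"
proof -
  interpret vertex_addition G D "k + t" using ktree_state_vertex_addition[OF G D] .
  have "card D = k" using D unfolding kcliques_iff by simp
  moreover have "root_piece k m C G \<subseteq> verts G"
    unfolding root_piece_def by (rule piece_subset_verts)
  ultimately show ?thesis
    unfolding piece_cliques_def root_piece_add_vertex[OF assms]
    by (rule card_kcliques_within_add_vertex)
qed

lemma piece_cliques_root_piece:
  assumes G: "G \<in> set_pmf (ktree_process k (m + d))" and C: "C \<in> root_cliques k m G"
  shows "k \<le> card (root_piece k m C G) \<and>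
         piece_cliques k m C G = 1 + k * (card (root_piece k m C G) - k)"
  using G C
proof (induction d arbitrary: G)
  case 0
  then have G: "ktree_state k m G" using ktree_state_process by simp
  have C: "C \<in> kcliques k G" using 0 initial_graph_self[OF G] unfolding root_cliques_def by simp
  have cC: "card C = k" using C unfolding kcliques_def by auto
  have "finite C" using C G finite_subset unfolding kcliques_iff ktree_state_def by auto
  then have "{Q \<in> kcliques k G. Q \<subseteq> C} = {C}"
    using C card_subset_eq unfolding kcliques_def by auto
  then show ?case unfolding piece_cliques_def root_piece_initial[OF G C] using cC by simp
next
  case (Suc d)
  from Suc.prems obtain G0 D where G0: "G0 \<in> set_pmf (ktree_process k (m + d))"
    and D: "D \<in> set_pmf (pmf_of_set (kcliques k G0))" and G: "G = add_vertex G0 D" by auto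
  have S: "ktree_state k (m + d) G0" using ktree_state_process[OF G0] .
  have D': "D \<in> kcliques k G0" using D ktree_state_kcliques[OF S] by simp
  have C: "C \<in> root_cliques k m G0" using Suc.prems(2) root_cliques_add_vertex[OF S] G by simp
  let ?P = "root_piece k m C G0"
  have P: "?P \<subseteq> {0..<k + (m + d)}"
    using piece_subset_verts S unfolding root_piece_def ktree_state_def by metis
  then have "finite ?P" "k + (m + d) \<notin> ?P" using finite_subset by auto
  then have card_P: "card (?P \<union> (if D \<subseteq> ?P then {k + (m + d)} else {})) =
      card ?P + (if D \<subseteq> ?P then 1 else 0)" by simp
  obtain k_le: "k \<le> card ?P" and cnt: "piece_cliques k m C G0 = 1 + k * (card ?P - k)"
    using Suc.IH[OF G0 C] by blast
  have "k * (card ?P + 1 - k) = k * (card ?P - k) + k" using k_le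
    by (simp add: Suc_diff_le)
  then show ?case
    unfolding G root_piece_add_vertex[OF S le_add1 D' C] piece_cliques_add_vertex[OF S le_add1 D' C]
      card_P cnt using k_le by simp
qed

definition piece_weight :: "nat \<Rightarrow> nat \<Rightarrow> nat set \<Rightarrow> graph \<Rightarrow> real" where
  "piece_weight k m C G = real (piece_cliques k m C G) / real k"

definition potential :: "nat \<Rightarrow> nat \<Rightarrow> (real \<Rightarrow> real) \<Rightarrow> graph \<Rightarrow> real" where
  "potential k m \<psi> G = (\<Sum>C\<in>root_cliques k m G. \<psi> (piece_weight k m C G))"

lemma piece_weight_ge:
  assumes "k \<ge> 1" "G \<in> set_pmf (ktree_process k (m + d))" "C \<in> root_cliques k m G"
  shows "1 / real k \<le> piece_weight k m C G"
  using piece_cliques_root_piece[OF assms(2,3)] unfolding piece_weight_def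
  by (simp add: divide_right_mono)

lemma card_root_piece_eq:
  assumes k: "k \<ge> 1" and "G \<in> set_pmf (ktree_process k (m + d))" "C \<in> root_cliques k m G"
  shows "real (card (root_piece k m C G)) = piece_weight k m C G - 1 / real k + real k"
proof -
  obtain "k \<le> card (root_piece k m C G)"
    and "piece_cliques k m C G = 1 + k * (card (root_piece k m C G) - k)"
    using piece_cliques_root_piece[OF assms(2,3)] by blast
  then have "real (piece_cliques k m C G) = 1 + real k * (real (card (root_piece k m C G)) - real k)"
    by (simp add: of_nat_diff)
  then show ?thesis using k unfolding piece_weight_def by (simp add: field_simps)
qed

lemma piece_weight_add_vertex:
  assumes k: "k \<ge> 1" and G: "ktree_state k t G" and m: "m \<le> t" and D: "D \<in> kcliques k G"
    and C: "C \<in> root_cliques k m G"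
  shows "piece_weight k m C (add_vertex G D) =
           piece_weight k m C G + (if D \<subseteq> root_piece k m C G then 1 else 0)"
  using piece_cliques_add_vertex[OF G m D C] k unfolding piece_weight_def
  by (simp add: add_divide_distrib)

lemma mean_potential_add_vertex:
  assumes k: "k \<ge> 1" and G: "G \<in> set_pmf (ktree_process k (m + d))"
    and rec: "\<And>u. 1 / real k \<le> u \<Longrightarrow> u * \<psi> (u + 1) = (u + a) * \<psi> u"
  shows "(\<Sum>D\<in>kcliques k G. potential k m \<psi> (add_vertex G D)) / real (card (kcliques k G)) =
         (1 + real k * a / (1 + real k * real (m + d))) * potential k m \<psi> G"
proof -
  let ?S = "kcliques k G"
  have S: "ktree_state k (m + d) G" using ktree_state_process[OF G] .
  have fin: "finite ?S" using ktree_state_kcliques[OF S] by simp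
  have card_S: "real (card ?S) = 1 + real k * real (m + d)" using S unfolding ktree_state_def by simp
  have per_clique: "(\<Sum>D\<in>?S. \<psi> (piece_weight k m C (add_vertex G D))) =
      (real (card ?S) + real k * a) * \<psi> (piece_weight k m C G)"
    if C: "C \<in> root_cliques k m G" for C
  proof -
    let ?P = "root_piece k m C G" and ?u = "piece_weight k m C G"
    let ?inside = "{D \<in> ?S. D \<subseteq> ?P}" and ?outside = "{D \<in> ?S. \<not> D \<subseteq> ?P}"
    have "card ?S = card ?inside + card ?outside"
      using fin by (subst card_Un_disjoint[symmetric]) (auto intro: arg_cong[where f = card])
    moreover have "real (card ?inside) = real k * ?u"
      using k unfolding piece_weight_def piece_cliques_def by simp
    ultimately have outside: "real (card ?outside) = real (card ?S) - real k * ?u" by simp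
    have "(\<Sum>D\<in>?S. \<psi> (piece_weight k m C (add_vertex G D))) =
          (\<Sum>D\<in>?S. if D \<subseteq> ?P then \<psi> (?u + 1) else \<psi> ?u)"
      by (rule sum.cong) (simp_all add: piece_weight_add_vertex[OF k S le_add1 _ C])
    also have "\<dots> = real (card ?inside) * \<psi> (?u + 1) + real (card ?outside) * \<psi> ?u"
      using fin by (simp add: sum.If_cases Int_def)
    also have "\<dots> = real k * (?u * \<psi> (?u + 1)) + (real (card ?S) - real k * ?u) * \<psi> ?u"
      unfolding outside \<open>real (card ?inside) = real k * ?u\<close> by simp
    also have "\<dots> = (real (card ?S) + real k * a) * \<psi> ?u"
      unfolding rec[OF piece_weight_ge[OF k G C]] by (simp add: algebra_simps)
    finally show ?thesis .
  qed
  have "(\<Sum>D\<in>?S. potential k m \<psi> (add_vertex G D)) =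
        (\<Sum>C\<in>root_cliques k m G. \<Sum>D\<in>?S. \<psi> (piece_weight k m C (add_vertex G D)))"
    unfolding potential_def root_cliques_add_vertex[OF S le_add1] by (rule sum.swap)
  also have "\<dots> = (real (card ?S) + real k * a) * potential k m \<psi> G"
    unfolding potential_def sum_distrib_left by (rule sum.cong) (simp_all add: per_clique)
  finally have "(\<Sum>D\<in>?S. potential k m \<psi> (add_vertex G D)) =
                (real (card ?S) + real k * a) * potential k m \<psi> G" .
  moreover have "0 < 1 + real k * real (m + d)" by (simp add: add_pos_nonneg)
  ultimately show ?thesis unfolding card_S by (simp add: field_simps)
qed

lemma expectation_potential:
  assumes k: "k \<ge> 1"
    and rec: "\<And>u. 1 / real k \<le> u \<Longrightarrow> u * \<psi> (u + 1) = (u + a) * \<psi> u"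
  shows "measure_pmf.expectation (ktree_process k (m + d)) (potential k m \<psi>) =
         (1 + real k * real m) * \<psi> (1 / real k) *
         (\<Prod>j<d. 1 + real k * a / (1 + real k * real (m + j)))"
proof (induction d)
  case 0
  have "potential k m \<psi> G = (1 + real k * real m) * \<psi> (1 / real k)"
    if G: "G \<in> set_pmf (ktree_process k m)" for G
  proof -
    have S: "ktree_state k m G" using ktree_state_process[OF G] .
    have R: "root_cliques k m G = kcliques k G"
      unfolding root_cliques_def initial_graph_self[OF S] ..
    have "piece_weight k m C G = 1 / real k" if C: "C \<in> kcliques k G" for C
      using piece_cliques_root_piece[of G k m 0 C] G C R root_piece_initial[OF S C]
      unfolding piece_weight_def kcliques_def by simp
    then show ?thesis using S unfolding potential_def R ktree_state_def by simp
  qed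
  then have "measure_pmf.expectation (ktree_process k m) (potential k m \<psi>) =
      measure_pmf.expectation (ktree_process k m) (\<lambda>_. (1 + real k * real m) * \<psi> (1 / real k))"
    by (intro integral_cong_AE) (simp_all add: AE_measure_pmf_iff)
  then show ?case by simp
next
  case (Suc d)
  have "measure_pmf.expectation (ktree_process k (m + Suc d)) (potential k m \<psi>) =
        measure_pmf.expectation (ktree_process k (m + d))
          (\<lambda>G. (1 + real k * a / (1 + real k * real (m + d))) * potential k m \<psi> G)"
    unfolding add_Suc_right expectation_ktree_process_Suc
    by (intro integral_cong_AE) (simp_all add: AE_measure_pmf_iff mean_potential_add_vertex[OF k _ rec])
  then show ?case using Suc.IH by (simp add: mult_ac)
qed

definition gamma_ratio :: "real \<Rightarrow> real \<Rightarrow> real" where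
  "gamma_ratio s u = Gamma (u - s) / Gamma u"

lemma Gamma_real_plus1: "0 < x \<Longrightarrow> Gamma (x + 1) = x * Gamma (x :: real)"
  by (rule Gamma_plus1) (auto elim!: nonpos_Ints_cases)

lemma gamma_ratio_recurrence:
  assumes "s < u" "0 < s"
  shows "u * gamma_ratio s (u + 1) = (u - s) * gamma_ratio s u"
proof -
  have "Gamma (u + 1 - s) = (u - s) * Gamma (u - s)"
    using Gamma_real_plus1[of "u - s"] assms by (simp add: algebra_simps)
  moreover have "Gamma (u + 1) = u * Gamma u" using Gamma_real_plus1[of u] assms by simp
  ultimately show ?thesis using assms unfolding gamma_ratio_def by (simp add: field_simps)
qed

lemma gamma_ratio_pos: "s < u \<Longrightarrow> 0 < s \<Longrightarrow> 0 < gamma_ratio s u"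
  unfolding gamma_ratio_def by simp

text \<open>Log-convexity of Gamma between u - s and u - s + 1 (a half of Gautschi's inequality).\<close>

lemma gamma_ratio_ge_powr:
  assumes "s < u" "0 < s" "s < 1"
  shows "1 \<le> u powr s * gamma_ratio s u"
proof -
  let ?x = "u - s"
  have x: "?x > 0" using assms by simp
  have "(ln \<circ> Gamma) ((1 - s) *\<^sub>R ?x + s *\<^sub>R (?x + 1)) \<le>
        (1 - s) * (ln \<circ> Gamma) ?x + s * (ln \<circ> Gamma) (?x + 1)"
    by (rule convex_onD[OF log_convex_Gamma_real]) (use assms in auto)
  moreover have "(1 - s) *\<^sub>R ?x + s *\<^sub>R (?x + 1) = u" by (simp add: algebra_simps)
  moreover have "ln (Gamma (?x + 1)) = ln ?x + ln (Gamma ?x)"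
    using Gamma_real_plus1[OF x] x by (simp add: ln_mult_pos)
  ultimately have "ln (Gamma u) \<le> ln (Gamma ?x) + s * ln ?x" by (simp add: algebra_simps)
  also have "s * ln ?x \<le> s * ln u" using assms x by (intro mult_left_mono) auto
  finally have "exp (ln (Gamma u)) \<le> exp (ln (Gamma ?x) + s * ln u)" by simp
  then have "Gamma u \<le> Gamma ?x * u powr s"
    using x assms by (simp add: exp_add powr_def)
  then show ?thesis unfolding gamma_ratio_def using assms by (simp add: field_simps)
qed

lemma one_le_non_moderate_charge:
  fixes u P L U c s :: real
  assumes "u \<le> P" "P < u + c" and "P < L \<or> U < P"
    and "0 < s" "s < 1" "s < u" "0 < L" "c < U"
  shows "1 \<le> L powr s * gamma_ratio s u + u / (U - c)"
proof -
  have "0 \<le> L powr s * gamma_ratio s u" "0 \<le> u / (U - c)"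
    using gamma_ratio_pos[of s u] assms by simp_all
  moreover consider "P < L" | "U < P" using assms by blast
  then have "1 \<le> L powr s * gamma_ratio s u \<or> 1 \<le> u / (U - c)"
  proof cases
    case 1
    then have "u powr s \<le> L powr s" using assms by (intro powr_mono2) auto
    then have "u powr s * gamma_ratio s u \<le> L powr s * gamma_ratio s u"
      using gamma_ratio_pos[of s u] assms by (intro mult_right_mono) auto
    then show ?thesis using gamma_ratio_ge_powr[of s u] assms by auto
  next
    case 2
    then show ?thesis using assms by simp
  qed
  ultimately show ?thesis by linarith
qed

lemma card_non_moderate_le_potentials:
  assumes k: "k \<ge> 1" and G: "G \<in> set_pmf (ktree_process k (m + d))"
    and L: "0 < L" and U: "real k < U" and s: "0 < s" "s < 1 / real k"
  shows "real (card {C \<in> root_cliques k m G. \<not> (L \<le> real (card (root_piece k m C G)) \<and>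
                                                real (card (root_piece k m C G)) \<le> U)})
    \<le> L powr s * potential k m (gamma_ratio s) G + potential k m (\<lambda>u. u) G / (U - real k)"
proof -
  let ?A = "{C \<in> root_cliques k m G. \<not> (L \<le> real (card (root_piece k m C G)) \<and>
                                          real (card (root_piece k m C G)) \<le> U)}"
  let ?g = "\<lambda>C. L powr s * gamma_ratio s (piece_weight k m C G) + piece_weight k m C G / (U - real k)"
  have "1 / real k \<le> 1" "1 \<le> real k" using k by simp_all
  then have inv_k: "0 < 1 / real k" "1 / real k \<le> real k" "s < 1" using s by linarith+
  have s_less: "s < piece_weight k m C G" if "C \<in> root_cliques k m G" for C
    using piece_weight_ge[OF k G that] s by simp
  have "real (card ?A) \<le> (\<Sum>C\<in>?A. ?g C)"
  proof (rule order_trans[OF _ sum_mono])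
    fix C assume C: "C \<in> ?A"
    then show "1 \<le> ?g C"
      using card_root_piece_eq[OF k G] s_less inv_k s L U
      by (intro one_le_non_moderate_charge[of _ "real (card (root_piece k m C G))"]) auto
  qed simp
  also have "\<dots> \<le> (\<Sum>C\<in>root_cliques k m G. ?g C)"
  proof (rule sum_mono2)
    show "finite (root_cliques k m G)"
      using finite_root_cliques[OF ktree_state_process[OF G] le_add1] .
    fix C assume "C \<in> root_cliques k m G - ?A"
    then show "0 \<le> ?g C"
      using s_less[of C] gamma_ratio_pos[of s "piece_weight k m C G"] s U by simp
  qed auto
  also have "\<dots> = L powr s * potential k m (gamma_ratio s) G + potential k m (\<lambda>u. u) G / (U - real k)"
    unfolding potential_def by (simp add: sum.distrib sum_distrib_left sum_divide_distrib)
  finally show ?thesis .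
qed

lemma one_minus_div_le_powr:
  fixes b s :: real
  assumes b: "0 < b" and s: "0 \<le> s"
  shows "1 - s / b \<le> (b / (b + 1)) powr s"
proof -
  have "ln (1 + 1 / b) \<le> 1 / b" using ln_add_one_self_le_self[of "1 / b"] b by simp
  then have "s * ln (1 + 1 / b) \<le> s / b" using mult_left_mono[OF _ s] by fastforce
  moreover have "ln (b / (b + 1)) = - ln (1 + 1 / b)" using b by (simp add: ln_div field_simps)
  ultimately have "1 - s / b \<le> 1 + s * ln (b / (b + 1))" by simp
  also have "\<dots> \<le> exp (s * ln (b / (b + 1)))" by (rule exp_ge_add_one_self)
  also have "\<dots> = (b / (b + 1)) powr s" using b by (simp add: powr_def)
  finally show ?thesis .
qed

lemma prod_one_minus_div_le_powr:
  fixes a s :: real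
  assumes a: "0 < a" and s: "0 < s" "s \<le> a"
  shows "(\<Prod>j<d. 1 - s / (a + real j)) \<le> (a / (a + real d)) powr s"
proof (induction d)
  case (Suc d)
  let ?b = "a + real d"
  have b: "0 < ?b" using a by simp
  have "(\<Prod>j<Suc d. 1 - s / (a + real j)) = (\<Prod>j<d. 1 - s / (a + real j)) * (1 - s / ?b)" by simp
  also have "\<dots> \<le> (a / ?b) powr s * (?b / (?b + 1)) powr s"
    using Suc.IH one_minus_div_le_powr[OF b, of s] s a
    by (intro mult_mono) (auto simp: field_simps)
  also have "\<dots> = (a / ?b * (?b / (?b + 1))) powr s"
    using powr_mult[of "a / ?b" "?b / (?b + 1)" s] a b by simp
  also have "a / ?b * (?b / (?b + 1)) = a / (a + real (Suc d))"
    using b by (simp add: nonzero_mult_divide_mult_cancel_right[of ?b a "?b + 1", symmetric]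
                          mult.commute add.assoc)
  finally show ?case .
qed (use a in simp)

lemma prod_one_plus_div_telescope:
  fixes a c :: real
  assumes "0 < a" "0 \<le> c"
  shows "(\<Prod>j<d. 1 + c / (a + c * real j)) = (a + c * real d) / a"
proof (induction d)
  case (Suc d)
  define A where "A = a + c * real d"
  have "0 < A" using assms unfolding A_def by (simp add: add_pos_nonneg)
  have "(\<Prod>j<Suc d. 1 + c / (a + c * real j)) = A / a * (1 + c / A)"
    using Suc unfolding A_def by simp
  also have "\<dots> = (A + c) / a" using \<open>0 < A\<close> assms by (simp add: field_simps)
  finally show ?case unfolding A_def by (simp add: algebra_simps)
qed (use assms in simp)

lemma expectation_potential_gamma_ratio_le:
  assumes k: "k \<ge> 1" and mn: "m \<le> n" and s: "0 < s" "s < 1 / real k"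
  shows "measure_pmf.expectation (ktree_process k n) (potential k m (gamma_ratio s)) \<le>
         (1 + real k * real m) * gamma_ratio s (1 / real k) *
         ((real m + 1 / real k) / (real n + 1 / real k)) powr s"
proof -
  obtain d where n: "n = m + d" using mn le_Suc_ex by blast
  have kpos: "0 < real k" "0 < 1 / real k" using k by simp_all
  have "measure_pmf.expectation (ktree_process k (m + d)) (potential k m (gamma_ratio s)) =
        (1 + real k * real m) * gamma_ratio s (1 / real k) *
        (\<Prod>j<d. 1 + real k * - s / (1 + real k * real (m + j)))"
    by (rule expectation_potential[OF k])
       (use s gamma_ratio_recurrence[of s] kpos in \<open>auto simp: less_le_trans\<close>)
  also have "(\<Prod>j<d. 1 + real k * - s / (1 + real k * real (m + j))) =
             (\<Prod>j<d. 1 - s / ((real m + 1 / real k) + real j))"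
    by (rule prod.cong) (use kpos in \<open>simp_all add: field_simps\<close>)
  also have "\<dots> \<le> ((real m + 1 / real k) / (real n + 1 / real k)) powr s"
    using prod_one_minus_div_le_powr[of "real m + 1 / real k" s d] s kpos
    unfolding n by (simp add: add_pos_nonneg add.commute add.left_commute)
  finally show ?thesis
    using gamma_ratio_pos[of s "1 / real k"] s kpos
    unfolding n by (simp add: add_pos_nonneg mult_left_mono)
qed

lemma expectation_potential_id:
  assumes k: "k \<ge> 1" and mn: "m \<le> n"
  shows "measure_pmf.expectation (ktree_process k n) (potential k m (\<lambda>u. u)) =
         (1 + real k * real n) / real k"
proof -
  obtain d where n: "n = m + d" using mn le_Suc_ex by blast
  have "measure_pmf.expectation (ktree_process k (m + d)) (potential k m (\<lambda>u. u)) =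
        (1 + real k * real m) * (1 / real k) * (\<Prod>j<d. 1 + real k * 1 / (1 + real k * real (m + j)))"
    by (rule expectation_potential[OF k]) simp
  also have "(\<Prod>j<d. 1 + real k * 1 / (1 + real k * real (m + j))) =
             (\<Prod>j<d. 1 + real k / ((1 + real k * real m) + real k * real j))"
    by (rule prod.cong) (simp_all add: algebra_simps)
  also have "\<dots> = (1 + real k * real n) / (1 + real k * real m)"
    unfolding n by (subst prod_one_plus_div_telescope) (simp_all add: add_pos_nonneg algebra_simps)
  finally show ?thesis
    unfolding n using add_pos_nonneg[of 1 "real k * real m"] by simp
qed

lemma expectation_card_non_moderate_le:
  assumes k: "k \<ge> 1" and mn: "m \<le> n" and L: "0 < L" and U: "real k < U"
    and s: "0 < s" "s < 1 / real k"
  shows "measure_pmf.expectation (ktree_process k n)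
           (\<lambda>G. real (card {C \<in> root_cliques k m G. \<not> (L \<le> real (card (root_piece k m C G)) \<and>
                                                     real (card (root_piece k m C G)) \<le> U)}))
   \<le> L powr s * ((1 + real k * real m) * gamma_ratio s (1 / real k) *
                  ((real m + 1 / real k) / (real n + 1 / real k)) powr s)
     + (1 + real k * real n) / real k / (U - real k)"
proof -
  obtain d where n: "n = m + d" using mn le_Suc_ex by blast
  let ?p = "ktree_process k n"
  have int: "integrable (measure_pmf ?p) F" for F :: "graph \<Rightarrow> real"
    using finite_set_pmf_ktree_process by (rule integrable_measure_pmf_finite)
  have "measure_pmf.expectation ?p
          (\<lambda>G. real (card {C \<in> root_cliques k m G. \<not> (L \<le> real (card (root_piece k m C G)) \<and>
                                                    real (card (root_piece k m C G)) \<le> U)}))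
        \<le> measure_pmf.expectation ?p
            (\<lambda>G. L powr s * potential k m (gamma_ratio s) G + potential k m (\<lambda>u. u) G / (U - real k))"
    by (rule integral_mono_AE[OF int int])
       (use card_non_moderate_le_potentials[OF k _ L U s] in \<open>auto simp: AE_measure_pmf_iff n\<close>)
  also have "\<dots> = L powr s * measure_pmf.expectation ?p (potential k m (gamma_ratio s))
                 + measure_pmf.expectation ?p (potential k m (\<lambda>u. u)) / (U - real k)"
    using int by simp
  finally show ?thesis
    using mult_left_mono[OF expectation_potential_gamma_ratio_le[OF k mn s], of "L powr s"]
      expectation_potential_id[OF k mn] by simp
qed

lemma non_moderate_count_eq:
  assumes "G \<in> set_pmf (ktree_process k n)" and "m \<le> n"
  shows "non_moderate_count k f n m G =
         card {C \<in> root_cliques k m G.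
                 \<not> (real n / (real m * f n) \<le> real (card (root_piece k m C G)) \<and>
                    real (card (root_piece k m C G)) \<le> real n * f n / real m)}"
  unfolding non_moderate_count_def root_cliques_def root_piece_def
    verts_initial_graph[OF ktree_state_process[OF assms(1)] assms(2)] ..

lemma small_pieces_term_le:
  fixes k m n x s H :: real
  assumes k: "1 \<le> k" and m: "1 \<le> m" and n: "1 \<le> n" and x: "1 \<le> x" and s: "0 < s"
    and H: "0 \<le> H"
  shows "(n / (m * x)) powr s * ((1 + k * m) * H * ((m + 1 / k) / (n + 1 / k)) powr s)
         \<le> m * ((k + 1) * H * (2 / x) powr s)"
proof -
  define L where "L = n / (m * x)"
  have L: "0 < L" unfolding L_def using m n x by simp
  have k_inv: "0 < 1 / k" "1 / k \<le> 1" using k by simp_all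
  have "L * ((m + 1 / k) / (n + 1 / k)) = (n / (n + 1 / k)) * ((m + 1 / k) / m) / x"
    unfolding L_def using m n x k_inv by (simp add: field_simps)
  also have "\<dots> \<le> 1 * 2 / x"
  proof (intro divide_right_mono mult_mono)
    have pos: "0 < n + 1 / k" using n k_inv by linarith
    show "n / (n + 1 / k) \<le> 1" unfolding pos_divide_le_eq[OF pos] using k_inv by simp
    have "0 < m" using m by simp
    then show "(m + 1 / k) / m \<le> 2" unfolding pos_divide_le_eq[OF \<open>0 < m\<close>] using m k_inv by linarith
  qed (use m x k_inv in auto)
  finally have "(L * ((m + 1 / k) / (n + 1 / k))) powr s \<le> (2 / x) powr s"
    using L k_inv m n s by (intro powr_mono2) auto
  then have "L powr s * ((m + 1 / k) / (n + 1 / k)) powr s \<le> (2 / x) powr s"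
    using L k_inv n by (subst (asm) powr_mult) auto
  then have "(1 + k * m) * H * (L powr s * ((m + 1 / k) / (n + 1 / k)) powr s)
        \<le> (1 + k * m) * H * (2 / x) powr s"
    using H k m by (intro mult_left_mono) auto
  also have "\<dots> \<le> (k + 1) * m * H * (2 / x) powr s"
    using m H by (intro mult_right_mono) (auto simp: algebra_simps)
  finally show ?thesis unfolding L_def by (simp add: mult_ac)
qed

lemma large_pieces_term_le:
  fixes k m n x :: real
  assumes k: "1 \<le> k" and m: "1 \<le> m" and n: "1 \<le> n" and x: "1 \<le> x"
    and mx: "2 * k * m \<le> n * x"
  shows "(1 + k * n) / k / (n * x / m - k) \<le> m * (4 / x)"
proof -
  have U: "n * x / (2 * m) \<le> n * x / m - k" using mx m by (simp add: field_simps)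
  have Upos: "0 < n * x / (2 * m)" using n m x by simp
  have "1 \<le> k * n" using mult_mono[of 1 k 1 n] k n by simp
  then have "(1 + k * n) / k \<le> 2 * n" using k by (simp add: pos_divide_le_eq algebra_simps)
  then have "(1 + k * n) / k / (n * x / m - k) \<le> (2 * n) / (n * x / (2 * m))"
    using U Upos k n by (intro frac_le) auto
  also have "\<dots> = m * (4 / x)" using n m x by (simp add: field_simps)
  finally show ?thesis .
qed

lemma expectation_non_moderate_count_le:
  fixes f :: "nat \<Rightarrow> real"
  assumes k: "k \<ge> 1" and mn: "m \<le> n" and m: "1 \<le> m" and f: "1 \<le> f n"
    and mf: "2 * real k * real m \<le> real n * f n" and s: "0 < s" "s < 1 / real k"
  shows "measure_pmf.expectation (ktree_process k n) (\<lambda>G. real (non_moderate_count k f n m G))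
     \<le> real m * ((real k + 1) * gamma_ratio s (1 / real k) * (2 / f n) powr s + 4 / f n)"
proof -
  have rk: "1 \<le> real k" and rm: "1 \<le> real m" and rn: "1 \<le> real n" using k m mn by simp_all
  have L: "0 < real n / (real m * f n)" using rn rm f by simp
  have "real k < real n * f n / (2 * real m) + real k" using rn rm f by simp
  also have "\<dots> \<le> real n * f n / real m" using mf rm by (simp add: field_simps)
  finally have U: "real k < real n * f n / real m" .
  have "measure_pmf.expectation (ktree_process k n) (\<lambda>G. real (non_moderate_count k f n m G)) =
        measure_pmf.expectation (ktree_process k n)
          (\<lambda>G. real (card {C \<in> root_cliques k m G.
                  \<not> (real n / (real m * f n) \<le> real (card (root_piece k m C G)) \<and>
                     real (card (root_piece k m C G)) \<le> real n * f n / real m)}))"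
    by (intro integral_cong_AE) (simp_all add: AE_measure_pmf_iff non_moderate_count_eq[OF _ mn])
  also have "\<dots> \<le> real m * ((real k + 1) * gamma_ratio s (1 / real k) * (2 / f n) powr s) +
                 real m * (4 / f n)"
    using expectation_card_non_moderate_le[OF k mn L U s]
      add_mono[OF small_pieces_term_le[OF rk rm rn f s(1)] large_pieces_term_le[OF rk rm rn f mf]]
      gamma_ratio_pos[of s "1 / real k"] s
    by (smt (verit))
  finally show ?thesis by (simp add: algebra_simps)
qed

lemma Markov_sublinear_threshold:
  fixes p :: "nat \<Rightarrow> 'a pmf" and X :: "nat \<Rightarrow> 'a \<Rightarrow> real" and M r :: "nat \<Rightarrow> real"
  assumes fin: "\<And>n. finite (set_pmf (p n))" and X: "\<And>n x. 0 \<le> X n x"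
    and bound: "eventually (\<lambda>n. 0 < M n \<and> 0 < r n \<and>
                  measure_pmf.expectation (p n) (X n) \<le> M n * r n) sequentially"
    and r: "r \<longlonglongrightarrow> 0"
  shows "\<exists>g. (\<lambda>n. g n / M n) \<longlonglongrightarrow> 0 \<and> (\<lambda>n. measure_pmf.prob (p n) {x. X n x \<le> g n}) \<longlonglongrightarrow> 1"
proof (intro exI conjI)
  let ?g = "\<lambda>n. M n * sqrt (r n)"
  have sqrt_r: "(\<lambda>n. sqrt (r n)) \<longlonglongrightarrow> 0" using tendsto_real_sqrt[OF r] by simp
  show "(\<lambda>n. ?g n / M n) \<longlonglongrightarrow> 0"
    by (rule Lim_transform_eventually[OF sqrt_r]) (use bound in \<open>auto elim: eventually_mono\<close>)
  have lower: "eventually (\<lambda>n. 1 - sqrt (r n) \<le> measure_pmf.prob (p n) {x. X n x \<le> ?g n})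
                 sequentially"
    using bound
  proof eventually_elim
    case (elim n)
    then have g: "0 < ?g n" by simp
    have "measure_pmf.prob (p n) {x. ?g n \<le> X n x} \<le> measure_pmf.expectation (p n) (X n) / ?g n"
      using integral_Markov_inequality_measure[of "p n" "X n" "{}" "?g n"] g X
      by (simp add: integrable_measure_pmf_finite[OF fin])
    also have "\<dots> \<le> M n * r n / ?g n" by (intro divide_right_mono) (use elim g in auto)
    also have "\<dots> = sqrt (r n)" using elim by (simp add: real_div_sqrt)
    finally have "measure_pmf.prob (p n) {x. ?g n \<le> X n x} \<le> sqrt (r n)" .
    moreover have "measure_pmf.prob (p n) {x. \<not> X n x \<le> ?g n} \<le> measure_pmf.prob (p n) {x. ?g n \<le> X n x}"
      by (rule measure_pmf.finite_measure_mono) auto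
    moreover have "measure_pmf.prob (p n) {x. \<not> X n x \<le> ?g n} = 1 - measure_pmf.prob (p n) {x. X n x \<le> ?g n}"
      using measure_pmf.prob_compl[of "{x. X n x \<le> ?g n}" "p n"]
      by (simp add: Compl_eq_Diff_UNIV[symmetric] Collect_neg_eq)
    ultimately show ?case by linarith
  qed
  have "(\<lambda>n. 1 - sqrt (r n)) \<longlonglongrightarrow> 1" using tendsto_diff[OF tendsto_const sqrt_r] by simp
  from tendsto_sandwich[OF lower _ this tendsto_const]
  show "(\<lambda>n. measure_pmf.prob (p n) {x. X n x \<le> ?g n}) \<longlonglongrightarrow> 1" by simp
qed

text \<open>The hypothesis f = o(log log n) is only needed in the weaker form f = o(n powr q),
  to ensure m \<le> n.\<close>

lemma eventually_ktree_parameters: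
  fixes f :: "nat \<Rightarrow> real" and m :: "nat \<Rightarrow> nat" and k :: nat
  assumes q: "0 < q" and f_small: "f \<in> o(\<lambda>n. real n powr q)"
    and f_large: "filterlim f at_top sequentially"
    and m: "\<And>n. m n = nat \<lceil>f n * real n powr (1 - q)\<rceil>"
  shows "eventually (\<lambda>n. 1 \<le> f n \<and> 1 \<le> m n \<and> m n \<le> n \<and> 2 * real k * real (m n) \<le> real n * f n)
           sequentially"
proof -
  have "eventually (\<lambda>n. norm (f n) \<le> 1 / 2 * norm (real n powr q)) sequentially"
    using landau_o.smallD[OF f_small, of "1 / 2"] by simp
  moreover have "filterlim (\<lambda>n. real n powr q) at_top sequentially" using q by real_asymp
  then have "eventually (\<lambda>n. 4 * real k + 1 \<le> real n powr q) sequentially"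
    by (simp add: filterlim_at_top)
  moreover have "eventually (\<lambda>n. 1 \<le> f n) sequentially" using f_large by (simp add: filterlim_at_top)
  moreover have "eventually (\<lambda>n. 4 * k + 2 \<le> n) sequentially" by (rule eventually_ge_at_top)
  ultimately show ?thesis
  proof eventually_elim
    case (elim n)
    have n: "4 * real k + 2 \<le> real n" using elim(4) by linarith
    have split: "real n powr (1 - q) * real n powr q = real n" using n by (simp add: powr_add[symmetric])
    define x where "x = f n * real n powr (1 - q)"
    have x: "0 < x" using elim(3) n unfolding x_def by simp
    have "x \<le> 1 / 2 * real n powr q * real n powr (1 - q)"
      unfolding x_def using elim(1,3) n by (intro mult_right_mono) auto
    then have x_le: "x \<le> real n / 2" using split by (simp add: mult_ac)
    have "real n powr (1 - q) * (4 * real k + 1) \<le> real n"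
      using mult_left_mono[OF elim(2), of "real n powr (1 - q)"] split by simp
    then have "4 * (real k * real n powr (1 - q)) + real n powr (1 - q) \<le> real n"
      by (simp add: algebra_simps)
    then have "2 * real k * real n powr (1 - q) \<le> real n / 2"
      using powr_ge_zero[of "real n" "1 - q"] unfolding mult.assoc by linarith
    have m_le: "real (m n) \<le> x + 1" and m_ge: "1 \<le> m n"
      using x unfolding m x_def[symmetric] by linarith+
    have "2 * real k * real (m n) \<le> f n * (2 * real k * real n powr (1 - q)) + 2 * real k"
      using mult_left_mono[OF m_le, of "2 * real k"] unfolding x_def by (simp add: algebra_simps)
    also have "\<dots> \<le> f n * (real n / 2) + f n * (real n / 2)"
      using \<open>2 * real k * real n powr (1 - q) \<le> real n / 2\<close> elim(3) n
      by (intro add_mono mult_left_mono) (auto intro: order_trans[OF _ mult_right_mono[of 1 "f n"]])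
    finally show ?case using elim(3) m_ge m_le x_le n by (simp add: algebra_simps)
  qed
qed

lemma tendsto_non_moderate_rate:
  fixes f :: "nat \<Rightarrow> real"
  assumes "filterlim f at_top sequentially" and "0 < s"
  shows "(\<lambda>n. c * (2 / f n) powr s + 4 / f n) \<longlonglongrightarrow> 0"
proof -
  have f: "filterlim f at_infinity sequentially" using assms(1) by (rule filterlim_at_top_imp_at_infinity)
  have "(\<lambda>n. (2 / f n) powr s) \<longlonglongrightarrow> 0"
    by (rule tendsto_zero_powrI[OF tendsto_divide_0[OF tendsto_const f] tendsto_const _ assms(2)])
       (use assms(1) in \<open>auto simp: filterlim_at_top elim: eventually_mono\<close>)
  then show ?thesis
    using tendsto_add[OF tendsto_mult_right_zero[of _ _ c] tendsto_divide_0[OF tendsto_const f, of 4]]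
    by simp
qed

theorem lemma9:
  fixes k :: nat and f :: "nat \<Rightarrow> real" and m :: "nat \<Rightarrow> nat"
  assumes "k \<ge> 2"
    and "f \<in> o(\<lambda>n. ln (ln (real n)))"
    and "filterlim f at_top sequentially"
    and "\<And>n. m n = nat \<lceil>f n * real n powr (1 - real k / real (k^2 + k - 1))\<rceil>"
  shows "\<exists>g :: nat \<Rightarrow> real. (\<lambda>n. g n / real (m n)) \<longlonglongrightarrow> 0 \<and>
           (\<lambda>n. measure_pmf.prob (ktree_process k n)
                  {G. real (non_moderate_count k f n (m n) G) \<le> g n}) \<longlonglongrightarrow> 1"
proof -
  define q where "q = real k / real (k^2 + k - 1)"
  define s where "s = 1 / (2 * real k)"
  define r where "r n = (real k + 1) * gamma_ratio s (1 / real k) * (2 / f n) powr s + 4 / f n" for n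
  have k: "k \<ge> 1" and s: "0 < s" "s < 1 / real k" using assms(1) by (auto simp: s_def field_simps)
  have "0 < k^2 + k - 1" using assms(1) by (simp add: power2_eq_square)
  then have "0 < real (k^2 + k - 1)" by (simp only: of_nat_0_less_iff)
  then have "0 < q" using k unfolding q_def by (intro divide_pos_pos) auto
  moreover have "(\<lambda>n. ln (ln (real n))) \<in> o(\<lambda>n. real n powr q)" using \<open>0 < q\<close> by real_asymp
  then have "f \<in> o(\<lambda>n. real n powr q)" by (rule landau_o.small_trans[OF assms(2)])
  ultimately have "eventually (\<lambda>n. 1 \<le> f n \<and> 1 \<le> m n \<and> m n \<le> n \<and>
                                   2 * real k * real (m n) \<le> real n * f n) sequentially"
    using eventually_ktree_parameters assms(3,4) unfolding q_def by blast
  then have "eventually (\<lambda>n. 0 < real (m n) \<and> 0 < r n \<and>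
      measure_pmf.expectation (ktree_process k n) (\<lambda>G. real (non_moderate_count k f n (m n) G))
        \<le> real (m n) * r n) sequentially"
  proof eventually_elim
    case (elim n)
    then show ?case
      using expectation_non_moderate_count_le[OF k _ _ _ _ s, of "m n" n f]
            gamma_ratio_pos[of s "1 / real k"] s
      unfolding r_def by (auto intro!: add_nonneg_pos)
  qed
  then show ?thesis
    using Markov_sublinear_threshold[OF finite_set_pmf_ktree_process _ _
            tendsto_non_moderate_rate[OF assms(3) s(1)]]
    unfolding r_def by auto
qed

end
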